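(* Let $n\ge2$ and $x\in\{0,\dots,n-1\}$ with $x\ge\frac{n+1}{2}$. Then $g_n(x)=1$; equivalently, with $k=n+1+x$, $V_n(k)\ge N(k,n)$.
   Context: Let $\mathcal X=\{A,B,C,D\}$ and let $(X_i)_{i\ge1}$ be the first-order Markov chain on $\mathcal X$ with $\mathbb P(X_1=x)=1/4$ for all $x$ and transitions: from $A$ to $A$ or $C$ w.p. $1/2$ each; from $B$ to $B$ or $D$ w.p. $1/2$ each; from $C$ and from $D$ to each of $A,B,C,D$ w.p. $1/4$. A nonempty string is admissible if all consecutive transitions have positive probability; $\mathcal A$ is the set of admissible nonempty strings; $K(u):=-\log_2\mathbb P(X_1^m=u)$ for $u=x_1^m\in\mathcal A$. $S_k:=\#\{u\in\mathcal A:K(u)=k\}$, $N(k,\ell):=\#\{u\in\mathcal A$ of length $\ell$ with $K(u)=k\}$, $W_{<n}(k):=\sum_{\ell=1}^{n-1}N(k,\ell)$, $V_n(k):=S_k/2-W_{<n}(k)$. Shortlex source code $C$: order nonempty binary strings by length then lexicographically as $b_1,b_2,\dots$; order $\mathcal A$ as $u_1,u_2,\dots$ by increasing $K$, then increasing length, then lexicographically with $A<B<C<D$; set $C(u_j):=b_j$. Let $K_n:=K(X_1^n)$, $L_n:=|C(X_1^n)|$, $I_n:=\mathbf 1\{L_n=K_n-1\}$, $X:=\#\{i\in\{1,\dots,n-1\}:X_i\in\{C,D\}\}$, and $g_n(x):=\mathbb P(I_n=1\mid X=x)$. *)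

theory Defs
  imports Complex_Main
begin

datatype sym = A | B | C | D

fun sym_idx :: "sym \<Rightarrow> nat" where
  "sym_idx A = 0" | "sym_idx B = 1" | "sym_idx C = 2" | "sym_idx D = 3"

fun trans_prob :: "sym \<Rightarrow> sym \<Rightarrow> real" where
  "trans_prob A y = (if y = A \<or> y = C then 1/2 else 0)"
| "trans_prob B y = (if y = B \<or> y = D then 1/2 else 0)"
| "trans_prob C y = 1/4"
| "trans_prob D y = 1/4"

text \<open>P(X_1^m = u), with the uniform initial distribution.\<close>
definition str_prob :: "sym list \<Rightarrow> real" where
  "str_prob u = (1/4) * (\<Prod>i<length u - 1. trans_prob (u ! i) (u ! (i+1)))"

definition admissible :: "sym list \<Rightarrow> bool" where
  "admissible u \<longleftrightarrow> u \<noteq> [] \<and> (\<forall>i < length u - 1. trans_prob (u ! i) (u ! (i+1)) > 0)"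

definition Kc :: "sym list \<Rightarrow> real" where
  "Kc u = - log 2 (str_prob u)"

definition S_cnt :: "nat \<Rightarrow> nat" where
  "S_cnt k = card {u. admissible u \<and> Kc u = real k}"

definition N_cnt :: "nat \<Rightarrow> nat \<Rightarrow> nat" where
  "N_cnt k l = card {u. admissible u \<and> length u = l \<and> Kc u = real k}"

definition W_lt :: "nat \<Rightarrow> nat \<Rightarrow> nat" where
  "W_lt n k = (\<Sum>l = 1..<n. N_cnt k l)"

definition V_val :: "nat \<Rightarrow> nat \<Rightarrow> real" where
  "V_val n k = real (S_cnt k) / 2 - real (W_lt n k)"

definition lex_lt :: "('a \<Rightarrow> nat) \<Rightarrow> 'a list \<Rightarrow> 'a list \<Rightarrow> bool" where
  "lex_lt f xs ys \<longleftrightarrow> length xs = length ys \<and>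
     (\<exists>i < length xs. take i xs = take i ys \<and> f (xs ! i) < f (ys ! i))"

definition src_before :: "sym list \<Rightarrow> sym list \<Rightarrow> bool" where
  "src_before v u \<longleftrightarrow> Kc v < Kc u \<or>
     (Kc v = Kc u \<and> (length v < length u \<or> (length v = length u \<and> lex_lt sym_idx v u)))"

definition src_rank :: "sym list \<Rightarrow> nat" where
  "src_rank u = 1 + card {v. admissible v \<and> src_before v u}"

definition bit_idx :: "bool \<Rightarrow> nat" where
  "bit_idx b = (if b then 1 else 0)"

definition bin_rank :: "bool list \<Rightarrow> nat" where
  "bin_rank w = 1 + card {w'. w' \<noteq> [] \<and>
      (length w' < length w \<or> (length w' = length w \<and> lex_lt bit_idx w' w))}"

text \<open>C(u_j) = b_j.\<close>
definition shortlex_code :: "sym list \<Rightarrow> bool list" where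
  "shortlex_code u = (THE w. w \<noteq> [] \<and> bin_rank w = src_rank u)"

definition I_ind :: "sym list \<Rightarrow> bool" where
  "I_ind u \<longleftrightarrow> real (length (shortlex_code u)) = Kc u - 1"

definition cd_count :: "sym list \<Rightarrow> nat" where
  "cd_count u = card {i. 1 \<le> i \<and> i \<le> length u - 1 \<and> u ! (i - 1) \<in> {C, D}}"

text \<open>g_n(x) = P(I_n = 1 | X = x), the probability being that of the chain,
  summed over all strings of length n (non-admissible strings have probability 0).\<close>
definition g_fun :: "nat \<Rightarrow> nat \<Rightarrow> real" where
  "g_fun n x =
     (\<Sum>u \<in> {u. length u = n \<and> admissible u \<and> cd_count u = x \<and> I_ind u}. str_prob u) /
     (\<Sum>u \<in> {u. length u = n \<and> admissible u \<and> cd_count u = x}. str_prob u)"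

end

(* An admissible string u has probability 2^-w(u), where w(u) = |u| + 1 + (number of letters C, D
   before the last letter), so K = w is an integer. Counting by the C/D-pattern gives
   N(k, l) = 4 C(l-1, k-l-1) 2^(k-l-1); in terms of m = k - 2 and i = k - l - 1 this is 4 C(m-i, i) 2^i,
   and summing over i yields S_k = 4 J_(k-1) with the Jacobsthal numbers J.
   The shortlex code gives the codewords of length L to the ranks 2^L - 1, ..., 2^(L+1) - 2, and
   2 J_k - 2 strings have weight below k. Since J_k + J_(k-1) = 2^(k-1) and J_k >= J_(k-1), a string of
   weight k gets a codeword of length k - 1 as soon as its rank inside its weight class is at most
   S_k / 2.
   For k = n + 1 + x, the strings of weight k and length at most n are those with at least x letters
   C, D before the last one. Pairing the terms C(m-i, i) 2^i for i = x + t and i = x - 1 - t shows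
   that they form at most half of the weight class once 2 x >= n + 1. This is V_n(k) >= N(k, n), and
   it places every string of length n with X = x at a rank that is coded with L_n = K_n - 1. *)

theory Submission
  imports Defs
begin

section \<open>Jacobsthal numbers\<close>

lemma Suc_choose_mult_diff:
  "(Suc n choose k) * (Suc n - k) * (n - k) = (n choose Suc k) * Suc n * Suc k"
proof -
  have "(Suc n choose k) * (Suc n - k) * (n - k) = Suc n * ((n - k) * (n choose k))"
    using binomial_absorb_comp[of "Suc n" k] by (simp add: algebra_simps)
  also have "(n - k) * (n choose k) = Suc k * (n choose Suc k)"
    using binomial_absorb_comp[of n k] binomial_absorption[of k n] by simp
  finally show ?thesis by (simp only: ac_simps)
qed

fun jacobsthal :: "nat \<Rightarrow> nat" where
  "jacobsthal 0 = 0"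
| "jacobsthal (Suc 0) = 1"
| "jacobsthal (Suc (Suc n)) = jacobsthal (Suc n) + 2 * jacobsthal n"

lemma jacobsthal_Suc_add: "jacobsthal (Suc n) + jacobsthal n = 2 ^ n"
  by (induction n) auto

lemma jacobsthal_le_Suc: "jacobsthal n \<le> jacobsthal (Suc n)"
  by (cases n rule: jacobsthal.cases) auto

lemma two_power_le_jacobsthal: "2 ^ n \<le> 2 * jacobsthal (Suc n)"
  using jacobsthal_Suc_add[of n] jacobsthal_le_Suc[of n] by linarith

lemma jacobsthal_sum: "2 * (\<Sum>i<n. jacobsthal i) + 1 = jacobsthal (Suc n)"
  by (induction n rule: induct_nat_012) auto

definition jacobsthal_term :: "nat \<Rightarrow> nat \<Rightarrow> nat" where
  "jacobsthal_term m i = ((m - i) choose i) * 2 ^ i"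

lemma jacobsthal_term_eq_0: "m < 2 * i \<Longrightarrow> jacobsthal_term m i = 0"
  by (simp add: jacobsthal_term_def)

lemma jacobsthal_term_0 [simp]: "jacobsthal_term m 0 = 1"
  by (simp add: jacobsthal_term_def)

lemma jacobsthal_term_Suc_Suc:
  "jacobsthal_term (Suc (Suc m)) (Suc i) = jacobsthal_term (Suc m) (Suc i) + 2 * jacobsthal_term m i"
proof (cases "i \<le> m")
  case True
  then have "Suc (Suc m) - Suc i = Suc (m - i)" "Suc m - Suc i = m - i" by simp_all
  then show ?thesis by (simp add: jacobsthal_term_def algebra_simps)
qed (simp add: jacobsthal_term_def)

lemma jacobsthal_eq_sum: "jacobsthal (Suc m) = (\<Sum>i\<le>m. jacobsthal_term m i)"
proof (induction m rule: induct_nat_012)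
  case (ge2 m)
  have shift: "(\<Sum>i\<le>Suc n. jacobsthal_term (Suc n) i) = 1 + (\<Sum>i\<le>n. jacobsthal_term (Suc n) (Suc i))"
    for n
    by (simp only: sum.atMost_Suc_shift) simp
  have "(\<Sum>i\<le>Suc m. jacobsthal_term m i) = (\<Sum>i\<le>m. jacobsthal_term m i)"
    by (simp add: jacobsthal_term_eq_0)
  then have "(\<Sum>i\<le>Suc (Suc m). jacobsthal_term (Suc (Suc m)) i)
      = (\<Sum>i\<le>Suc m. jacobsthal_term (Suc m) i) + 2 * (\<Sum>i\<le>m. jacobsthal_term m i)"
    by (simp only: shift jacobsthal_term_Suc_Suc sum.distrib sum_distrib_left[symmetric])
      (simp add: jacobsthal_term_eq_0)
  then show ?case
    using ge2 by simp
qed (simp_all add: jacobsthal_term_def)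

lemma jacobsthal_term_Suc:
  "jacobsthal_term m (Suc i) * ((m - i) * Suc i)
     = 2 * jacobsthal_term m i * ((m - 2 * i) * (m - 2 * i - 1))"
proof (cases "i < m")
  case True
  then obtain n where "m = Suc (i + n)"
    using less_imp_Suc_add by blast
  then have n: "m - i = Suc n" and n': "m - Suc i = n" "m - 2 * i = Suc n - i"
    by simp_all
  have "jacobsthal_term m (Suc i) * ((m - i) * Suc i) = 2 * 2 ^ i * ((n choose Suc i) * Suc n * Suc i)"
    unfolding jacobsthal_term_def n n'(1) by (simp only: power_Suc ac_simps)
  also have "\<dots> = 2 * 2 ^ i * ((Suc n choose i) * (Suc n - i) * (n - i))"
    by (simp only: Suc_choose_mult_diff)
  also have "\<dots> = 2 * jacobsthal_term m i * ((m - 2 * i) * (m - 2 * i - 1))"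
    unfolding jacobsthal_term_def n n'(2) by (simp add: ac_simps)
  finally show ?thesis .
next
  case False
  then have "m - i = 0" "m - 2 * i = 0"
    by simp_all
  then show ?thesis
    by (simp only: mult_0 mult_0_right)
qed

lemma jacobsthal_term_le_pred:
  assumes "m + 2 \<le> 3 * x" "0 < x"
  shows "jacobsthal_term m x \<le> jacobsthal_term m (x - 1)"
proof (cases "m < 2 * x")
  case False
  obtain e where m: "m = 2 * x + e"
    using False le_iff_add[of "2 * x" m] by auto
  then obtain f where x: "x = e + 2 + f"
    using assms(1) le_iff_add[of "e + 2" x] by auto
  define y where "y = x - 1"
  have "Suc y = x" "m - y = 2 * e + f + 3" "m - 2 * y = e + 2"
    unfolding y_def m x by simp_all
  then have ratio: "jacobsthal_term m x * ((2 * e + f + 3) * x)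
      = jacobsthal_term m y * (2 * ((e + 2) * (e + 1)))"
    using jacobsthal_term_Suc[of m y] by (simp add: ac_simps)
  have "2 * ((e + 2) * (e + 1)) \<le> (2 * e + f + 3) * x"
    unfolding x by (simp add: algebra_simps)
  then have "jacobsthal_term m x * ((2 * e + f + 3) * x) \<le> jacobsthal_term m y * ((2 * e + f + 3) * x)"
    unfolding ratio by (rule mult_le_mono2)
  then show ?thesis
    unfolding y_def x by simp
qed (simp add: jacobsthal_term_eq_0)

(* Going one step outwards multiplies the upper term by 2 R1 / P1 and the lower one by P2 / (2 R2)
   (jacobsthal_term_Suc), so it suffices that 4 R1 R2 <= P1 P2. Once m and x are expressed through
   slack variables e and f, this polynomial inequality has only nonnegative coefficients. *)
lemma jacobsthal_term_reflect_step:
  assumes "m + 2 \<le> 3 * x" "Suc t < x"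
    and IH: "jacobsthal_term m (x + t) \<le> jacobsthal_term m (x - Suc t)"
  shows "jacobsthal_term m (x + Suc t) \<le> jacobsthal_term m (x - Suc (Suc t))"
proof (cases "m < 2 * (x + Suc t)")
  case False
  obtain e where m: "m = 2 * x + 2 * t + 2 + e"
    using False le_iff_add[of "2 * x + 2 * t + 2" m] by auto
  then obtain f where x: "x = 2 * t + 4 + e + f"
    using assms(1) le_iff_add[of "2 * t + 4 + e" x] by auto
  define i where "i = x + t"
  define j where "j = x - Suc (Suc t)"
  define P1 R1 P2 R2 where "P1 = (m - i) * Suc i" and "R1 = (m - 2 * i) * (m - 2 * i - 1)"
    and "P2 = (m - j) * Suc j" and "R2 = (m - 2 * j) * (m - 2 * j - 1)"
  let ?a = "jacobsthal_term m"
  have ratio_i: "?a (Suc i) * P1 = 2 * ?a i * R1"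
    unfolding P1_def R1_def by (rule jacobsthal_term_Suc)
  have ratio_j: "?a (Suc j) * P2 = 2 * ?a j * R2"
    unfolding P2_def R2_def by (rule jacobsthal_term_Suc)
  have vals: "m - i = 3 * t + 6 + 2 * e + f" "Suc i = 3 * t + 5 + e + f" "m - 2 * i = e + 2"
    "m - j = 5 * t + 8 + 2 * e + f" "Suc j = t + 3 + e + f" "m - 2 * j = 4 * t + 6 + e"
    unfolding i_def j_def m x by simp_all
  have "P1 = (3 * t + 6 + 2 * e + f) * (3 * t + 5 + e + f)" "R1 = (e + 2) * (e + 1)"
    "P2 = (5 * t + 8 + 2 * e + f) * (t + 3 + e + f)" "R2 = (4 * t + 6 + e) * (4 * t + 5 + e)"
    unfolding P1_def R1_def P2_def R2_def vals by simp_all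
  then have poly: "4 * R1 * R2 \<le> P1 * P2" and pos: "0 < P1 * P2"
    by (simp_all add: algebra_simps)
  have "?a (Suc i) * (P1 * P2) = 2 * ?a i * R1 * P2"
    by (simp only: ratio_i mult.assoc[symmetric])
  also have "\<dots> \<le> 2 * ?a (Suc j) * R1 * P2"
    using IH assms(2) by (simp add: i_def j_def Suc_diff_Suc)
  also have "\<dots> = 2 * R1 * (?a (Suc j) * P2)"
    by (simp only: ac_simps)
  also have "\<dots> = ?a j * (4 * R1 * R2)"
    unfolding ratio_j by (simp add: algebra_simps)
  also have "\<dots> \<le> ?a j * (P1 * P2)"
    using poly by (rule mult_le_mono2)
  finally show ?thesis
    using pos unfolding i_def j_def by simp
qed (simp add: jacobsthal_term_eq_0)

lemma jacobsthal_term_reflect_le: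
  assumes "m + 2 \<le> 3 * x" "t < x"
  shows "jacobsthal_term m (x + t) \<le> jacobsthal_term m (x - Suc t)"
  using assms(2)
proof (induction t)
  case 0
  then show ?case
    using jacobsthal_term_le_pred[OF assms(1)] by simp
next
  case (Suc t)
  then show ?case
    using jacobsthal_term_reflect_step[OF assms(1)] by simp
qed

lemma jacobsthal_tail_le:
  assumes "m + 2 \<le> 3 * x"
  shows "2 * (\<Sum>i\<in>{x..m}. jacobsthal_term m i) \<le> jacobsthal (Suc m)"
proof (cases "x \<le> m")
  case True
  let ?a = "jacobsthal_term m"
  have vanish: "?a i = 0" if "2 * x \<le> i" for i
    using that assms by (intro jacobsthal_term_eq_0) linarith
  have "(\<Sum>i\<in>{x..m}. ?a i) = (\<Sum>i\<in>{x..m} \<inter> {x..<2 * x}. ?a i)"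
    by (intro sum.mono_neutral_right) (auto simp: not_less vanish)
  also have "\<dots> \<le> (\<Sum>i\<in>{x..<2 * x}. ?a i)"
    by (rule sum_mono2) auto
  also have "\<dots> = (\<Sum>t<x. ?a (x + t))"
    using sum.shift_bounds_nat_ivl[of ?a 0 x x] by (simp add: mult_2 atLeast0LessThan add.commute)
  also have "\<dots> \<le> (\<Sum>t<x. ?a (x - Suc t))"
    using jacobsthal_term_reflect_le[OF assms] by (intro sum_mono) simp
  also have "\<dots> = (\<Sum>i<x. ?a i)"
    by (rule sum.nat_diff_reindex)
  finally have "(\<Sum>i\<in>{x..m}. ?a i) \<le> (\<Sum>i<x. ?a i)" .
  moreover have "jacobsthal (Suc m) = (\<Sum>i<x. ?a i) + (\<Sum>i\<in>{x..m}. ?a i)"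
  proof -
    have "{..m} = {..<x} \<union> {x..m}"
      using True by auto
    then show ?thesis
      by (simp add: jacobsthal_eq_sum) (rule sum.union_disjoint; auto)
  qed
  ultimately show ?thesis by simp
qed simp

section \<open>Weights of admissible strings\<close>

lemma UNIV_sym: "(UNIV :: sym set) = {A, B, C, D}"
  using sym.exhaust by auto

instance sym :: finite
  by standard (simp add: UNIV_sym)

lemma not_admissible_Nil [simp]: "\<not> admissible []"
  by (simp add: admissible_def)

lemma admissible_Cons_Cons [simp]:
  "admissible (s # y # r) \<longleftrightarrow> trans_prob s y > 0 \<and> admissible (y # r)"
  by (auto simp: admissible_def less_Suc_eq_0_disj)

lemma admissible_singleton [simp]: "admissible [s]"
  by (simp add: admissible_def)

lemma str_prob_singleton [simp]: "str_prob [s] = 1/4"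
  by (simp add: str_prob_def)

lemma str_prob_Cons_Cons [simp]: "str_prob (s # y # r) = trans_prob s y * str_prob (y # r)"
  by (simp only: str_prob_def length_Cons diff_Suc_1 prod.lessThan_Suc_shift) simp

lemma cd_count_eq_length_filter: "cd_count u = length (filter (\<lambda>s. s \<in> {C, D}) (butlast u))"
proof -
  have "{i. 1 \<le> i \<and> i \<le> length u - 1 \<and> u ! (i - 1) \<in> {C, D}}
      = Suc ` {i. i < length (butlast u) \<and> butlast u ! i \<in> {C, D}}"
  proof (intro set_eqI iffI)
    fix i
    assume "i \<in> {i. 1 \<le> i \<and> i \<le> length u - 1 \<and> u ! (i - 1) \<in> {C, D}}"
    then show "i \<in> Suc ` {i. i < length (butlast u) \<and> butlast u ! i \<in> {C, D}}"
      by (auto simp: nth_butlast image_iff intro!: exI[of _ "i - 1"])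
  qed (auto simp: nth_butlast)
  then show ?thesis
    by (simp add: cd_count_def length_filter_conv_card card_image)
qed

lemma cd_count_singleton [simp]: "cd_count [s] = 0"
  by (simp add: cd_count_eq_length_filter)

lemma cd_count_Cons_Cons [simp]:
  "cd_count (s # y # r) = of_bool (s \<in> {C, D}) + cd_count (y # r)"
  by (simp add: cd_count_eq_length_filter)

definition weight :: "sym list \<Rightarrow> nat" where
  "weight u = length u + 1 + cd_count u"

lemma str_prob_eq_weight: "admissible u \<Longrightarrow> str_prob u = (1/2) ^ weight u"
proof (induction u rule: induct_list012)
  case (3 s y r)
  then show ?case
    by (cases s; cases y) (auto simp: weight_def power_add)
qed (auto simp: weight_def power2_eq_square)

lemma Kc_eq_weight: "admissible u \<Longrightarrow> Kc u = weight u"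
  by (simp add: Kc_def str_prob_eq_weight log_nat_power log_divide)

lemma finite_admissible_weight_le: "finite {u. admissible u \<and> weight u \<le> k}"
  using finite_lists_length_le[of "UNIV :: sym set" k]
  by (rule finite_subset[rotated]) (auto simp: weight_def)

section \<open>Counting strings by weight and length\<close>

definition extensions :: "sym \<Rightarrow> nat \<Rightarrow> nat \<Rightarrow> sym list set" where
  "extensions s l c = {v. length v = l \<and> admissible (s # v) \<and> cd_count (s # v) = c}"

lemma finite_extensions: "finite (extensions s l c)"
  using finite_lists_length_eq[of "UNIV :: sym set" l]
  by (rule finite_subset[rotated]) (auto simp: extensions_def)

lemma extensions_0: "extensions s 0 c = (if c = 0 then {[]} else {})"
  by (auto simp: extensions_def)

lemma extensions_Suc:
  "extensions s (Suc l) c = (if of_bool (s \<in> {C, D}) \<le> c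
     then (\<Union>y \<in> {y. 0 < trans_prob s y}. Cons y ` extensions y l (c - of_bool (s \<in> {C, D})))
     else {})"
proof -
  have "v \<in> extensions s (Suc l) c \<longleftrightarrow> v \<in> (if of_bool (s \<in> {C, D}) \<le> c
     then (\<Union>y \<in> {y. 0 < trans_prob s y}. Cons y ` extensions y l (c - of_bool (s \<in> {C, D})))
     else {})" for v
    by (cases v) (auto simp: extensions_def image_iff)
  then show ?thesis
    by blast
qed

lemma card_extensions_Suc:
  "card (extensions s (Suc l) c) = (if of_bool (s \<in> {C, D}) \<le> c
     then (\<Sum>y | 0 < trans_prob s y. card (extensions y l (c - of_bool (s \<in> {C, D})))) else 0)"
proof -
  have "card (\<Union>y \<in> {y. 0 < trans_prob s y}. Cons y ` extensions y l c')
      = (\<Sum>y | 0 < trans_prob s y. card (extensions y l c'))" for c'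
    by (subst card_UN_disjoint) (auto simp: finite_extensions card_image)
  then show ?thesis
    by (simp add: extensions_Suc)
qed

lemma successor_sets:
  "{y. 0 < trans_prob A y} = {A, C}" "{y. 0 < trans_prob B y} = {B, D}"
  "{y. 0 < trans_prob C y} = UNIV" "{y. 0 < trans_prob D y} = UNIV"
  using sym.exhaust by auto

(* From A and from B there is one successor in {C, D} and one outside; from C and from D there are
   two of each. *)
lemma card_extensions:
  "card (extensions A l c) = card (extensions B l c) \<and> card (extensions C l c) = card (extensions D l c)
     \<and> card (extensions A l c) + card (extensions C l c) = 2 * (l choose c) * 2 ^ c"
proof (induction l arbitrary: c)
  case 0
  then show ?case
    by (simp add: extensions_0)
next
  case (Suc l)
  have AB: "card (extensions A (Suc l) c) = 2 * (l choose c) * 2 ^ c"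
    "card (extensions B (Suc l) c) = 2 * (l choose c) * 2 ^ c"
    unfolding card_extensions_Suc successor_sets using Suc[of c] by simp_all
  have CD: "card (extensions C (Suc l) c) = (if c = 0 then 0 else 4 * (l choose (c - 1)) * 2 ^ (c - 1))"
    "card (extensions D (Suc l) c) = (if c = 0 then 0 else 4 * (l choose (c - 1)) * 2 ^ (c - 1))"
    unfolding card_extensions_Suc successor_sets UNIV_sym using Suc[of "c - 1"] by simp_all
  have "2 * (l choose c) * 2 ^ c + (if c = 0 then 0 else 4 * (l choose (c - 1)) * 2 ^ (c - 1))
      = 2 * (Suc l choose c) * 2 ^ c"
    by (cases c) (simp_all add: algebra_simps)
  then show ?case
    using AB CD by simp
qed

lemma N_cnt_eq_card: "N_cnt k l = card {u. admissible u \<and> weight u = k \<and> length u = l}"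
  unfolding N_cnt_def by (rule arg_cong[where f = card]) (auto simp: Kc_eq_weight)

lemma S_cnt_eq_card: "S_cnt k = card {u. admissible u \<and> weight u = k}"
  unfolding S_cnt_def by (rule arg_cong[where f = card]) (auto simp: Kc_eq_weight)

lemma N_cnt_0: "N_cnt k 0 = 0"
  by (simp add: N_cnt_def)

lemma N_cnt_Suc:
  "N_cnt k (Suc l) = (if l + 2 \<le> k then 4 * jacobsthal_term (k - 2) (k - 2 - l) else 0)"
proof -
  have "{u. admissible u \<and> weight u = k \<and> length u = Suc l}
      = (\<Union>s. Cons s ` (if l + 2 \<le> k then extensions s l (k - l - 2) else {}))"
  proof -
    have "u \<in> {u. admissible u \<and> weight u = k \<and> length u = Suc l} \<longleftrightarrow>
        u \<in> (\<Union>s. Cons s ` (if l + 2 \<le> k then extensions s l (k - l - 2) else {}))" for u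
      by (cases u) (auto simp: extensions_def weight_def image_iff)
    then show ?thesis
      by blast
  qed
  then have "N_cnt k (Suc l) = (\<Sum>s\<in>UNIV. card (if l + 2 \<le> k then extensions s l (k - l - 2) else {}))"
    unfolding N_cnt_eq_card
    by (simp only:) (subst card_UN_disjoint; auto simp: finite_extensions card_image)
  also have "\<dots> = (if l + 2 \<le> k then 4 * jacobsthal_term (k - 2) (k - 2 - l) else 0)"
  proof (cases "l + 2 \<le> k")
    case True
    then have "k - 2 - (k - 2 - l) = l" "k - 2 - l = k - l - 2"
      by simp_all
    then show ?thesis
      using True card_extensions[of l "k - l - 2"] by (simp add: UNIV_sym jacobsthal_term_def)
  qed simp
  finally show ?thesis .
qed

lemma sum_N_cnt:
  assumes "n \<le> Suc m"
  shows "(\<Sum>l<Suc n. N_cnt (m + 2) l) = 4 * (\<Sum>i\<in>{Suc m - n..m}. jacobsthal_term m i)"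
proof -
  have "(\<Sum>l<Suc n. N_cnt (m + 2) l) = 4 * (\<Sum>l<n. jacobsthal_term m (m - l))"
    unfolding sum.lessThan_Suc_shift N_cnt_0 using assms by (simp add: N_cnt_Suc sum_distrib_left)
  also have "(\<Sum>l<n. jacobsthal_term m (m - l)) = (\<Sum>i\<in>{Suc m - n..m}. jacobsthal_term m i)"
    by (rule sum.reindex_bij_witness[of _ "\<lambda>i. m - i" "\<lambda>i. m - i"]) (use assms in auto)
  finally show ?thesis .
qed

lemma card_weight_length_less:
  "card {u. admissible u \<and> weight u = k \<and> length u < n} = (\<Sum>l<n. N_cnt k l)"
proof -
  have "{u. admissible u \<and> weight u = k \<and> length u < n}
      = (\<Union>l<n. {u. admissible u \<and> weight u = k \<and> length u = l})"
    by auto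
  moreover have "finite {u. admissible u \<and> weight u = k \<and> length u = l}" for l
    using finite_admissible_weight_le[of k] by (rule finite_subset[rotated]) auto
  ultimately show ?thesis
    unfolding N_cnt_eq_card by (simp only:) (rule card_UN_disjoint; auto)
qed

lemma S_cnt_eq_jacobsthal: "S_cnt k = 4 * jacobsthal (k - 1)"
proof (cases "k < 2")
  case True
  then have empty: "{u. admissible u \<and> weight u = k} = {}" and "k - 1 = 0"
    by (auto simp: weight_def)
  then show ?thesis
    unfolding S_cnt_eq_card empty by simp
next
  case False
  then obtain m where k: "k = m + 2"
    by (metis add.commute le_Suc_ex not_less)
  have "{u. admissible u \<and> weight u = k} = {u. admissible u \<and> weight u = k \<and> length u < Suc (Suc m)}"
    by (auto simp: weight_def k)
  then have "S_cnt k = (\<Sum>l<Suc (Suc m). N_cnt (m + 2) l)"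
    by (simp add: S_cnt_eq_card card_weight_length_less k)
  also have "\<dots> = 4 * jacobsthal (Suc m)"
    using sum_N_cnt[of "Suc m" m] by (simp add: jacobsthal_eq_sum atLeast0AtMost)
  finally show ?thesis
    by (simp add: k)
qed

lemma card_weight_less: "card {u. admissible u \<and> weight u < k} = (\<Sum>j<k. S_cnt j)"
proof -
  have "{u. admissible u \<and> weight u < k} = (\<Union>j<k. {u. admissible u \<and> weight u = j})"
    by auto
  moreover have "finite {u. admissible u \<and> weight u = j}" for j
    using finite_admissible_weight_le[of j] by (rule finite_subset[rotated]) auto
  ultimately show ?thesis
    unfolding S_cnt_eq_card by (simp only:) (rule card_UN_disjoint; auto)
qed

lemma card_weight_less_jacobsthal:
  "card {u. admissible u \<and> weight u < Suc k} + 2 = 2 * jacobsthal (Suc k)"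
proof -
  have "card {u. admissible u \<and> weight u < Suc k} = 4 * (\<Sum>j<k. jacobsthal j)"
    unfolding card_weight_less sum.lessThan_Suc_shift S_cnt_eq_jacobsthal by (simp add: sum_distrib_left)
  then show ?thesis
    using jacobsthal_sum[of k] by simp
qed

section \<open>Ranks of binary strings in shortlex order\<close>

lemma lex_lt_iff_lexord:
  "lex_lt f xs ys \<longleftrightarrow> length xs = length ys \<and> (xs, ys) \<in> lexord {(a, b). f a < f b}"
  by (auto simp: lex_lt_def lexord_take_index_conv)

lemma lex_lt_irrefl: "\<not> lex_lt f xs xs"
  by (simp add: lex_lt_def)

lemma lex_lt_trans:
  assumes "lex_lt f xs ys" "lex_lt f ys zs"
  shows "lex_lt f xs zs"
proof -
  have "trans {(a, b). f a < f b}"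
    by (auto simp: trans_def)
  then show ?thesis
    using assms unfolding lex_lt_iff_lexord by (metis lexord_trans)
qed

lemma lex_lt_total:
  assumes "inj f" "length xs = length ys" "xs \<noteq> ys"
  shows "lex_lt f xs ys \<or> lex_lt f ys xs"
proof -
  have "\<forall>a b. (a, b) \<in> {(a, b). f a < f b} \<or> a = b \<or> (b, a) \<in> {(a, b). f a < f b}"
    using assms(1) by (auto simp: inj_eq dest: linorder_neqE_nat)
  then show ?thesis
    using lexord_linear[of "{(a, b). f a < f b}" xs ys] assms(2,3) by (auto simp: lex_lt_iff_lexord)
qed

lemma card_nonempty_lists_shorter: "card {w :: bool list. w \<noteq> [] \<and> length w < Suc n} = 2 ^ Suc n - 2"
proof -
  have "{w :: bool list. w \<noteq> [] \<and> length w < Suc n} = {w. length w \<le> n} - {[]}"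
    by auto
  moreover have "card {w :: bool list. length w \<le> n} = 2 ^ Suc n - 1"
    using card_lists_length_le[of "UNIV :: bool set" n] sum_power2[of "Suc n"]
    by (simp add: atLeast0LessThan lessThan_Suc_atMost)
  moreover have "finite {w :: bool list. length w \<le> n}"
    using finite_lists_length_le[of "UNIV :: bool set" n] by simp
  ultimately show ?thesis
    by (simp add: card_Diff_singleton)
qed

definition lex_below :: "bool list \<Rightarrow> bool list set" where
  "lex_below w = {w'. length w' = length w \<and> lex_lt bit_idx w' w}"

lemma finite_lex_below: "finite (lex_below w)"
  using finite_lists_length_eq[of "UNIV :: bool set" "length w"]
  by (rule finite_subset[rotated]) (auto simp: lex_below_def)

lemma bin_rank_eq:
  assumes "w \<noteq> []"
  shows "bin_rank w = 2 ^ length w - 1 + card (lex_below w)"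
proof -
  obtain n where n: "length w = Suc n"
    using assms by (cases w) auto
  let ?S = "{w' :: bool list. w' \<noteq> [] \<and> length w' < length w}"
  have "bin_rank w = 1 + card (?S \<union> lex_below w)"
    unfolding bin_rank_def lex_below_def using assms by (intro arg_cong[where f = "\<lambda>A. 1 + card A"]) auto
  also have "card (?S \<union> lex_below w) = card ?S + card (lex_below w)"
  proof (rule card_Un_disjoint)
    show "finite ?S"
      using finite_lists_length_le[of "UNIV :: bool set" "length w"] by (rule finite_subset[rotated]) auto
  qed (use assms finite_lex_below in \<open>auto simp: lex_below_def\<close>)
  finally have "bin_rank w = 1 + (2 ^ Suc n - 2) + card (lex_below w)"
    using n card_nonempty_lists_shorter[of n] by simp
  moreover have "(2::nat) \<le> 2 ^ Suc n"
    by simp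
  ultimately show ?thesis
    unfolding n by linarith
qed

lemma bin_rank_bounds:
  assumes "w \<noteq> []"
  shows "bin_rank w \<in> {2 ^ length w - 1 .. 2 ^ Suc (length w) - 2}"
proof -
  have "lex_below w \<subseteq> {w'. length w' = length w} - {w}"
    by (auto simp: lex_below_def lex_lt_irrefl)
  then have "card (lex_below w) \<le> 2 ^ length w - 1"
    using card_mono[OF _ \<open>lex_below w \<subseteq> _\<close>] card_lists_length_eq[of "UNIV :: bool set" "length w"]
      finite_lists_length_eq[of "UNIV :: bool set" "length w"]
    by (simp add: card_Diff_singleton)
  moreover have "1 \<le> (2::nat) ^ length w"
    by simp
  ultimately show ?thesis
    using bin_rank_eq[OF assms] by auto
qed

lemma bin_rank_less_length:
  assumes "w \<noteq> []" "length w < length w'"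
  shows "bin_rank w < bin_rank w'"
proof -
  have "(2::nat) ^ Suc (length w) \<le> 2 ^ length w'"
    using assms(2) by (intro power_increasing) auto
  moreover have "(2::nat) \<le> 2 ^ Suc (length w)"
    by simp
  moreover have "w' \<noteq> []"
    using assms(2) by auto
  then have "bin_rank w \<le> 2 ^ Suc (length w) - 2" "2 ^ length w' - 1 \<le> bin_rank w'"
    using bin_rank_bounds[of w] bin_rank_bounds[of w'] assms(1) by simp_all
  ultimately show ?thesis
    by linarith
qed

lemma bin_rank_less_lex:
  assumes "w \<noteq> []" "lex_lt bit_idx w w'"
  shows "bin_rank w < bin_rank w'"
proof -
  have len: "length w = length w'"
    using assms(2) by (simp add: lex_lt_def)
  have "lex_below w \<subset> lex_below w'"
    using assms(2) len lex_lt_trans[of bit_idx _ w w'] lex_lt_irrefl[of bit_idx w]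
    by (auto simp: lex_below_def)
  then have "card (lex_below w) < card (lex_below w')"
    by (simp add: finite_lex_below psubset_card_mono)
  moreover have "w' \<noteq> []"
    using assms len by auto
  then have "bin_rank w' = 2 ^ length w - 1 + card (lex_below w')"
    using len by (simp add: bin_rank_eq)
  moreover have "bin_rank w = 2 ^ length w - 1 + card (lex_below w)"
    using assms(1) by (rule bin_rank_eq)
  ultimately show ?thesis
    by linarith
qed

lemma inj_on_bin_rank: "inj_on bin_rank {w. w \<noteq> []}"
proof (rule inj_onI, rule ccontr)
  fix w w'
  assume "w \<in> {w. w \<noteq> []}" "w' \<in> {w. w \<noteq> []}" and eq: "bin_rank w = bin_rank w'" and "w \<noteq> w'"
  then have ne: "w \<noteq> []" "w' \<noteq> []"
    by auto
  have "inj bit_idx"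
    by (rule injI) (simp add: bit_idx_def split: if_splits)
  then have "length w < length w' \<or> length w' < length w \<or> lex_lt bit_idx w w' \<or> lex_lt bit_idx w' w"
    using lex_lt_total[of bit_idx w w'] \<open>w \<noteq> w'\<close> by linarith
  then show False
    using bin_rank_less_length bin_rank_less_lex ne eq by (metis less_irrefl)
qed

lemma bin_rank_image:
  assumes "0 < L"
  shows "bin_rank ` {w. length w = L} = {2 ^ L - 1 .. 2 ^ Suc L - 2}"
proof (rule card_subset_eq)
  show "bin_rank ` {w. length w = L} \<subseteq> {2 ^ L - 1 .. 2 ^ Suc L - 2}"
  proof
    fix j
    assume "j \<in> bin_rank ` {w. length w = L}"
    then obtain w where "length w = L" "j = bin_rank w"
      by blast
    then show "j \<in> {2 ^ L - 1 .. 2 ^ Suc L - 2}"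
      using assms bin_rank_bounds[of w] by auto
  qed
  have "inj_on bin_rank {w. length w = L}"
    by (rule inj_on_subset[OF inj_on_bin_rank]) (use assms in auto)
  then have "card (bin_rank ` {w. length w = L}) = 2 ^ L"
    using card_lists_length_eq[of "UNIV :: bool set" L] by (simp add: card_image)
  moreover have "card {(2::nat) ^ L - 1 .. 2 ^ Suc L - 2} = 2 ^ L"
    using one_le_power[of "2::nat" L] power_Suc[of "2::nat" L]
    by (simp only: card_atLeastAtMost) linarith
  ultimately show "card (bin_rank ` {w. length w = L}) = card {(2::nat) ^ L - 1 .. 2 ^ Suc L - 2}"
    by simp
qed (rule finite_atLeastAtMost)

lemma length_shortlex_code:
  assumes "0 < L" "src_rank u \<in> {2 ^ L - 1 .. 2 ^ Suc L - 2}"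
  shows "length (shortlex_code u) = L"
proof -
  have "src_rank u \<in> bin_rank ` {w. length w = L}"
    using bin_rank_image[OF assms(1)] assms(2) by (simp only:)
  then obtain w where w: "length w = L" "bin_rank w = src_rank u"
    by (auto simp: image_iff)
  have "shortlex_code u = w"
    unfolding shortlex_code_def
  proof (rule the_equality)
    show "w \<noteq> [] \<and> bin_rank w = src_rank u"
      using w assms(1) by auto
    show "w' = w" if "w' \<noteq> [] \<and> bin_rank w' = src_rank u" for w'
      using inj_onD[OF inj_on_bin_rank, of w' w] that w assms(1) by auto
  qed
  then show ?thesis
    using w by simp
qed

section \<open>Codeword lengths of source strings\<close>

lemma src_rank_bounds:
  assumes "admissible u"
  shows "card {v. admissible v \<and> weight v < weight u} < src_rank u"
    and "src_rank u \<le> card {v. admissible v \<and> weight v < weight u}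
                       + card {v. admissible v \<and> weight v = weight u \<and> length v \<le> length u}"
proof -
  let ?R = "{v. admissible v \<and> src_before v u}"
  let ?lighter = "{v. admissible v \<and> weight v < weight u}"
  let ?peers = "{v. admissible v \<and> weight v = weight u \<and> length v \<le> length u}"
  have fin: "finite {v. admissible v \<and> weight v \<le> weight u}"
    by (rule finite_admissible_weight_le)
  have before: "src_before v u \<longleftrightarrow> weight v < weight u \<or> (weight v = weight u \<and>
      (length v < length u \<or> (length v = length u \<and> lex_lt sym_idx v u)))" if "admissible v" for v
    using that assms by (simp add: src_before_def Kc_eq_weight)
  have "?lighter \<subseteq> ?R"
    using before by auto
  then have "card ?lighter \<le> card ?R"
    by (rule card_mono[rotated]) (rule finite_subset[OF _ fin]; use before in auto)
  then show "card ?lighter < src_rank u"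
    by (simp add: src_rank_def)
  have "?R \<subseteq> ?lighter \<union> (?peers - {u})"
    using before by (auto simp: lex_lt_irrefl)
  then have "card ?R \<le> card (?lighter \<union> (?peers - {u}))"
    by (rule card_mono[rotated]) (auto intro: finite_subset[OF _ fin])
  also have "\<dots> \<le> card ?lighter + card (?peers - {u})"
    by (rule card_Un_le)
  also have "card (?peers - {u}) = card ?peers - 1"
    using assms by simp
  finally have "card ?R \<le> card ?lighter + (card ?peers - 1)" .
  moreover have "finite ?peers"
    by (rule finite_subset[OF _ fin]) auto
  then have "0 < card ?peers"
    using assms by (auto simp: card_gt_0_iff)
  ultimately show "src_rank u \<le> card ?lighter + card ?peers"
    by (simp add: src_rank_def)
qed

lemma length_shortlex_code_eq_weight:
  assumes "admissible u" and "2 * (\<Sum>l<Suc (length u). N_cnt (weight u) l) \<le> S_cnt (weight u)"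
  shows "length (shortlex_code u) = weight u - 1"
proof -
  let ?lighter = "{v. admissible v \<and> weight v < weight u}"
  let ?peers = "{v. admissible v \<and> weight v = weight u \<and> length v \<le> length u}"
  have "card ?peers = (\<Sum>l<Suc (length u). N_cnt (weight u) l)"
    using card_weight_length_less[of "weight u" "Suc (length u)"] by (simp add: less_Suc_eq_le)
  then have peers: "card ?peers \<le> 2 * jacobsthal (weight u - 1)"
    using assms(2) by (simp add: S_cnt_eq_jacobsthal)
  have "2 \<le> weight u"
    using assms(1) by (cases u) (auto simp: weight_def)
  then obtain m where k: "weight u = m + 2"
    using le_iff_add[of 2 "weight u"] by auto
  have lighter: "card ?lighter + 2 = 2 * jacobsthal (m + 2)"
    using card_weight_less_jacobsthal[of "Suc m"] k by simp
  have "2 ^ (m + 1) \<le> 2 * jacobsthal (m + 2)" "jacobsthal (m + 2) + jacobsthal (m + 1) = 2 ^ (m + 1)"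
    using two_power_le_jacobsthal[of "m + 1"] jacobsthal_Suc_add[of "m + 1"] by simp_all
  moreover have "(2::nat) ^ Suc (m + 1) = 2 * 2 ^ (m + 1)"
    by simp
  ultimately have "src_rank u \<in> {2 ^ (m + 1) - 1 .. 2 ^ Suc (m + 1) - 2}"
    using src_rank_bounds[OF assms(1)] lighter peers k by auto
  then show ?thesis
    using length_shortlex_code[of "m + 1"] k by simp
qed

lemma short_strings_at_most_half:
  assumes "0 < n" "n + 1 \<le> 2 * x"
  shows "2 * (\<Sum>l<Suc n. N_cnt (n + 1 + x) l) \<le> S_cnt (n + 1 + x)"
proof -
  define m where "m = n - 1 + x"
  have m: "n + 1 + x = m + 2" "Suc m - n = x" "n \<le> Suc m"
    using assms by (simp_all add: m_def)
  have "(\<Sum>l<Suc n. N_cnt (n + 1 + x) l) = 4 * (\<Sum>i\<in>{x..m}. jacobsthal_term m i)"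
    using sum_N_cnt[OF m(3)] m(1,2) by simp
  moreover have "2 * (\<Sum>i\<in>{x..m}. jacobsthal_term m i) \<le> jacobsthal (Suc m)"
    using assms by (intro jacobsthal_tail_le) (simp add: m_def)
  moreover have "S_cnt (n + 1 + x) = 4 * jacobsthal (Suc m)"
    using m(1) by (simp add: S_cnt_eq_jacobsthal)
  ultimately show ?thesis
    by simp
qed

lemma W_lt_add_N_cnt: "W_lt n k + N_cnt k n = (\<Sum>l<Suc n. N_cnt k l)"
proof (cases n)
  case (Suc n')
  then show ?thesis
    by (simp add: W_lt_def N_cnt_0 atLeast0LessThan[symmetric] sum.atLeast_Suc_lessThan)
qed (simp add: W_lt_def N_cnt_0)

lemma admissible_replicate_C_A: "admissible (replicate i C @ replicate (Suc j) A)"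
proof (induction i)
  case 0
  show ?case
    by (induction j) auto
next
  case (Suc i)
  then show ?case
    by (cases "replicate i C @ replicate (Suc j) A") auto
qed

lemma cd_count_replicate_C_A: "cd_count (replicate i C @ replicate (Suc j) A) = i"
proof -
  have "butlast (replicate (Suc j) A) = replicate j A"
    by (induction j) auto
  then show ?thesis
    by (simp add: cd_count_eq_length_filter butlast_append filter_replicate)
qed

lemma g_fun_eq_1:
  assumes "x < n" and I: "\<And>u. length u = n \<Longrightarrow> admissible u \<Longrightarrow> cd_count u = x \<Longrightarrow> I_ind u"
  shows "g_fun n x = 1"
proof -
  let ?D = "{u. length u = n \<and> admissible u \<and> cd_count u = x}"
  have "finite ?D"
    using finite_lists_length_eq[of "UNIV :: sym set" n] by (rule finite_subset[rotated]) auto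
  moreover have "replicate x C @ replicate (Suc (n - x - 1)) A \<in> ?D"
    using assms(1) admissible_replicate_C_A cd_count_replicate_C_A by simp
  ultimately have "0 < sum str_prob ?D"
    by (intro sum_pos) (auto simp: str_prob_eq_weight)
  moreover have "{u. length u = n \<and> admissible u \<and> cd_count u = x \<and> I_ind u} = ?D"
    using I by blast
  ultimately show ?thesis
    by (simp add: g_fun_def)
qed

theorem mainTheorem9:
  fixes n x :: nat
  assumes "n \<ge> 2" and "x \<le> n - 1" and "real x \<ge> (real n + 1) / 2"
  shows "g_fun n x = 1 \<and> V_val n (n + 1 + x) \<ge> real (N_cnt (n + 1 + x) n)"
proof
  have "real (n + 1) \<le> real (2 * x)"
    using assms(3) by simp
  then have half: "2 * (\<Sum>l<Suc n. N_cnt (n + 1 + x) l) \<le> S_cnt (n + 1 + x)"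
    using assms(1) by (intro short_strings_at_most_half) simp_all
  then show "V_val n (n + 1 + x) \<ge> real (N_cnt (n + 1 + x) n)"
    using W_lt_add_N_cnt[of n "n + 1 + x"] unfolding V_val_def by linarith
  show "g_fun n x = 1"
  proof (rule g_fun_eq_1)
    show "x < n"
      using assms(1,2) by linarith
    fix u
    assume u: "length u = n" "admissible u" "cd_count u = x"
    then have "weight u = n + 1 + x"
      by (simp add: weight_def)
    then show "I_ind u"
      using length_shortlex_code_eq_weight[of u] half u by (simp add: I_ind_def Kc_eq_weight)
  qed
qed

end
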